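(* Let $f_\bullet\colon X\to Z$ be any set mapping between finite metric spaces, let $V=\mathrm{PH}_0(X)$, $U=\mathrm{PH}_0(Z)$, and let $f_0\colon V_0\to U_0$ be the induced linear map. Then for all $a\in S^V$ and all $b\in S^U$, $\mathcal{M}^0_f(a,b)=\dim H_1(G(f_\bullet)_{(a,b)})$, i.e. $\mathcal{M}^0_f(a,b)$ equals the number of independent cycles (first Betti number) of the graph $G(f_\bullet)_{(a,b)}$.
   Context: All vector spaces are over $\mathbb{Z}_2$. For a finite metric space $(X,d^X)$ and $r\ge 0$, $\mathrm{VR}_r(X)$ is the graph with vertex set $X$ and edges $[x,y]$ with $d^X(x,y)\le r$; write $\mathrm{VR}^+_s(X)=\mathrm{VR}_s(X)$ and $\mathrm{VR}^-_s(X)=\bigcup_{r<s}\mathrm{VR}_r(X)$ (edges with $d^X(x,y)<s$). $\mathrm{PH}_0(X)$ is the persistence module $r\mapsto H_0(\mathrm{VR}_r(X))$ (vector space freely generated by connected components) with structure maps $\rho_{rs}$ induced by inclusion; in particular $\mathrm{PH}_0(X)_0$ has basis $X$. Since $X$ is finite, $\mathrm{PH}_0(X)\cong \bigoplus_{b>0}\kappa_{[0,b)}^{m^V(b)}\oplus\kappa_{[0,\infty)}$; the barcode is the multiset $(S^V,m^V)$ with $S^V\subset(0,\infty)$ the set of finite $b$ with $m^V(b)>0$ (the infinite bar is excluded). For a persistence module $U$ and $b>0$ let $\ker^+_b(U)=\ker(\rho^U_{0b})$ and $\ker^-_b(U)=\bigcup_{0\le r<b}\ker(\rho^U_{0r})$,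 subspaces of $U_0$. For a set mapping $f_\bullet\colon X\to Z$, $f_0\colon V_0\to U_0$ is the linear map sending the basis element $x$ to $f_\bullet(x)$, and for $a,b>0$ $$\mathcal{M}^0_f(a,b)=\dim\frac{f_0(\ker^+_a V)\cap \ker^+_b U}{f_0(\ker^-_a V)\cap\ker^+_b U+f_0(\ker^+_a V)\cap \ker^-_b U}.$$ For $a,b>0$, $f_\bullet(\mathrm{VR}^\pm_a(X))$ denotes the graph with vertex set $f_\bullet(X)$ and edges $[f_\bullet(x),f_\bullet(y)]$ for edges $[x,y]$ of $\mathrm{VR}^\pm_a(X)$. Let $\mathcal{A}=f_\bullet(\mathrm{VR}^+_a(X))\cup\mathrm{VR}^-_b(Z)$, $\mathcal{B}=f_\bullet(\mathrm{VR}^-_a(X))\cup \mathrm{VR}^+_b(Z)$, $\mathcal{C}=f_\bullet(\mathrm{VR}^-_a(X))\cup\mathrm{VR}^-_b(Z)$, all graphs on vertex set $Z$, so $\mathcal{C}\subseteq\mathcal{A},\mathcal{B}$. Let $\pi_0$ denote the set of connected components, and $\iota\colon\pi_0(\mathcal{C})\to\pi_0(\mathcal{A})$, $\mu\colon\pi_0(\mathcal{C})\to\pi_0(\mathcal{B})$ the maps induced by inclusion. $G(f_\bullet)_{(a,b)}$ is the graph with vertex set the disjoint union $\pi_0(\mathcal{A})\sqcup\pi_0(\mathcal{C})\sqcup\pi_0(\mathcal{B})$ and edges $(c,\iota(c))$ and $(c,\mu(c))$ for all $c\in\pi_0(\mathcal{C})$. *)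

theory Defs
  imports "HOL-Analysis.Analysis" "HOL-Library.Z2"
begin

definition finite_metric :: "('x::finite \<Rightarrow> 'x \<Rightarrow> real) \<Rightarrow> bool" where
  "finite_metric d \<longleftrightarrow> (\<forall>x y. d x y = 0 \<longleftrightarrow> x = y) \<and> (\<forall>x y. d x y = d y x)
     \<and> (\<forall>x y z. d x z \<le> d x y + d y z)"

text \<open>Graphs on the vertex set UNIV, given by an edge relation.\<close>
definition conn :: "('a \<times> 'a) set \<Rightarrow> ('a \<times> 'a) set" where
  "conn E = (E \<union> E\<inverse>)\<^sup>*"

definition components :: "('a \<times> 'a) set \<Rightarrow> 'a set set" where
  "components E = UNIV // conn E"

definition VR :: "('x \<Rightarrow> 'x \<Rightarrow> real) \<Rightarrow> real \<Rightarrow> ('x \<times> 'x) set" where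
  "VR d r = {(x, y). d x y \<le> r}"

definition VRm :: "('x \<Rightarrow> 'x \<Rightarrow> real) \<Rightarrow> real \<Rightarrow> ('x \<times> 'x) set" where
  "VRm d r = {(x, y). d x y < r}"

definition img_graph :: "('x \<Rightarrow> 'z) \<Rightarrow> ('x \<times> 'x) set \<Rightarrow> ('z \<times> 'z) set" where
  "img_graph f E = (\<lambda>(x, y). (f x, f y)) ` E"

text \<open>The structure map H_0(VR_0) = Z_2^X -> H_0(G), where H_0(G) is the vector space
  freely generated by the components of G (encoded as vectors indexed by sets of points,
  supported on the components).\<close>
definition rho0 :: "('x::finite \<times> 'x) set \<Rightarrow> bit ^ 'x \<Rightarrow> bit ^ ('x set)" where
  "rho0 E v = (\<chi> C. if C \<in> components E then (\<Sum>x\<in>C. v $ x) else 0)"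

definition kerE :: "('x::finite \<times> 'x) set \<Rightarrow> (bit ^ 'x) set" where
  "kerE E = {v. rho0 E v = 0}"

definition ker_plus :: "('x::finite \<Rightarrow> 'x \<Rightarrow> real) \<Rightarrow> real \<Rightarrow> (bit ^ 'x) set" where
  "ker_plus d b = kerE (VR d b)"

definition ker_minus :: "('x::finite \<Rightarrow> 'x \<Rightarrow> real) \<Rightarrow> real \<Rightarrow> (bit ^ 'x) set" where
  "ker_minus d b = (\<Union>r\<in>{0..<b}. kerE (VR d r))"

text \<open>Multiplicity of the bar [0,b) in PH_0 and the set S of finite death times.\<close>
definition mult0 :: "('x::finite \<Rightarrow> 'x \<Rightarrow> real) \<Rightarrow> real \<Rightarrow> nat" where
  "mult0 d b = vec.dim (ker_plus d b) - vec.dim (ker_minus d b)"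

definition bars0 :: "('x::finite \<Rightarrow> 'x \<Rightarrow> real) \<Rightarrow> real set" where
  "bars0 d = {b. 0 < b \<and> mult0 d b > 0}"

definition f0 :: "('x::finite \<Rightarrow> 'z::finite) \<Rightarrow> bit ^ 'x \<Rightarrow> bit ^ 'z" where
  "f0 f v = (\<chi> z. \<Sum>x\<in>{x. f x = z}. v $ x)"

definition subspace_sum :: "('a::ab_group_add) set \<Rightarrow> 'a set \<Rightarrow> 'a set" where
  "subspace_sum A B = {u + w | u w. u \<in> A \<and> w \<in> B}"

text \<open>dim (N / D) for subspaces D \<subseteq> N.\<close>
definition quot_dim :: "(bit ^ 'n::finite) set \<Rightarrow> (bit ^ 'n) set \<Rightarrow> nat" where
  "quot_dim N D = vec.dim N - vec.dim D"

definition Mf0 :: "('x::finite \<Rightarrow> 'x \<Rightarrow> real) \<Rightarrow> ('z::finite \<Rightarrow> 'z \<Rightarrow> real)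
    \<Rightarrow> ('x \<Rightarrow> 'z) \<Rightarrow> real \<Rightarrow> real \<Rightarrow> nat" where
  "Mf0 dX dZ f a b =
     quot_dim (f0 f ` ker_plus dX a \<inter> ker_plus dZ b)
       (subspace_sum (f0 f ` ker_minus dX a \<inter> ker_plus dZ b)
                     (f0 f ` ker_plus dX a \<inter> ker_minus dZ b))"

text \<open>There are no 2-cells, so H_1 = Z_1 = ker of the boundary
  map C_1 -> C_0, boundary e = s e + t e.\<close>
definition cycle_space :: "'e::finite set \<Rightarrow> ('e \<Rightarrow> 'v) \<Rightarrow> ('e \<Rightarrow> 'v) \<Rightarrow> (bit ^ 'e) set" where
  "cycle_space Es s t =
     {v. (\<forall>e. e \<notin> Es \<longrightarrow> v $ e = 0) \<and>
         (\<forall>w. (\<Sum>e\<in>{e\<in>Es. s e = w}. v $ e) + (\<Sum>e\<in>{e\<in>Es. t e = w}. v $ e) = 0)}"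

definition graph_H1_dim :: "'e::finite set \<Rightarrow> ('e \<Rightarrow> 'v) \<Rightarrow> ('e \<Rightarrow> 'v) \<Rightarrow> nat" where
  "graph_H1_dim Es s t = vec.dim (cycle_space Es s t)"

text \<open>Vertices: Inl for pi_0(A), Inr (Inl _) for pi_0(C),
  Inr (Inr _) for pi_0(B). Edges: (c, False) = (c, iota c), (c, True) = (c, mu c)
  for c in pi_0(C). iota c = the A-component containing c, i.e. conn A `` c.\<close>
definition GA :: "('x \<Rightarrow> 'x \<Rightarrow> real) \<Rightarrow> ('z \<Rightarrow> 'z \<Rightarrow> real) \<Rightarrow> ('x \<Rightarrow> 'z) \<Rightarrow> real \<Rightarrow> real \<Rightarrow> ('z \<times> 'z) set" where
  "GA dX dZ f a b = img_graph f (VR dX a) \<union> VRm dZ b"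
definition GB :: "('x \<Rightarrow> 'x \<Rightarrow> real) \<Rightarrow> ('z \<Rightarrow> 'z \<Rightarrow> real) \<Rightarrow> ('x \<Rightarrow> 'z) \<Rightarrow> real \<Rightarrow> real \<Rightarrow> ('z \<times> 'z) set" where
  "GB dX dZ f a b = img_graph f (VRm dX a) \<union> VR dZ b"
definition GC :: "('x \<Rightarrow> 'x \<Rightarrow> real) \<Rightarrow> ('z \<Rightarrow> 'z \<Rightarrow> real) \<Rightarrow> ('x \<Rightarrow> 'z) \<Rightarrow> real \<Rightarrow> real \<Rightarrow> ('z \<times> 'z) set" where
  "GC dX dZ f a b = img_graph f (VRm dX a) \<union> VRm dZ b"

definition G_H1_dim :: "('x \<Rightarrow> 'x \<Rightarrow> real) \<Rightarrow> ('z::finite \<Rightarrow> 'z \<Rightarrow> real) \<Rightarrow> ('x \<Rightarrow> 'z) \<Rightarrow> real \<Rightarrow> real \<Rightarrow> nat" where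
  "G_H1_dim dX dZ f a b =
     graph_H1_dim ({c. c \<in> components (GC dX dZ f a b)} \<times> UNIV)
       (\<lambda>(c, _). (Inr (Inl c) :: 'z set + 'z set + 'z set))
       (\<lambda>(c, side). if side then Inr (Inr (conn (GB dX dZ f a b) `` c))
                    else Inl (conn (GA dX dZ f a b) `` c))"

end

theory Submission
  imports Defs
begin

text \<open>Over \<open>\<int>\<^sub>2\<close> the kernel of \<open>H\<^sub>0(VR\<^sub>0) \<rightarrow> H\<^sub>0(G)\<close> is spanned by the edge vectors
  \<open>e\<^sub>u + e\<^sub>v\<close> of \<open>G\<close>. Hence taking kernels turns unions of graphs into sums of subspaces,
  and \<open>f\<^sub>0\<close> maps the kernel of a graph onto that of its image graph. With
  \<open>P' = f\<^sub>0(ker\<^sup>+\<^sub>a V)\<close>, \<open>P = f\<^sub>0(ker\<^sup>-\<^sub>a V)\<close>, \<open>Q' = ker\<^sup>+\<^sub>b U\<close>, \<open>Q = ker\<^sup>-\<^sub>b U\<close> this gives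
  \<open>ker A = P' + Q\<close>, \<open>ker B = P + Q'\<close>, \<open>ker C = P + Q\<close>, and Grassmann's formula shows
  \<open>dim (P' \<inter> Q') / (P \<inter> Q' + P' \<inter> Q) = dim ((P' + Q) \<inter> (P + Q')) / (P + Q)\<close>,
  i.e. \<open>M = dim (ker A \<inter> ker B) - dim (ker C)\<close>.
  Finally, summing over the components of \<open>C\<close> maps \<open>ker A \<inter> ker B\<close> onto the cycle space
  of \<open>G(f)\<close>, with kernel \<open>ker C\<close>: the cycle condition at a vertex of \<open>\<pi>\<^sub>0(A)\<close> (of \<open>\<pi>\<^sub>0(B)\<close>)
  says that the component sums over its fibre vanish, which is membership in \<open>ker A\<close>
  (in \<open>ker B\<close>), and the condition at a vertex of \<open>\<pi>\<^sub>0(C)\<close> says that its two edges carry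
  the same value.\<close>

section \<open>Linear algebra\<close>

lemma subspace_subspace_sum:
  "vec.subspace A \<Longrightarrow> vec.subspace B \<Longrightarrow> vec.subspace (subspace_sum A B)"
  unfolding subspace_sum_def by (rule vec.subspace_sums)

lemma dim_subspace_sum_plus_dim_inter:
  "vec.subspace A \<Longrightarrow> vec.subspace B \<Longrightarrow>
   vec.dim (subspace_sum A B) + vec.dim (A \<inter> B) = vec.dim A + vec.dim B"
  unfolding subspace_sum_def by (rule vec.dim_sums_Int)

lemma ex_subspace_complement:
  fixes K S :: "('a::field ^ 'n) set"
  assumes K: "vec.subspace K" and S: "vec.subspace S" and "K \<subseteq> S"
  obtains R where "vec.subspace R" "R \<subseteq> S" "subspace_sum R K = S" "R \<inter> K \<subseteq> {0}"
proof -
  obtain B where B: "B \<subseteq> K" "vec.independent B" "K \<subseteq> vec.span B" "card B = vec.dim K"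
    using vec.basis_exists by blast
  obtain C where C: "B \<subseteq> C" "C \<subseteq> S" "vec.independent C" "S \<subseteq> vec.span C"
    using vec.maximal_independent_subset_extend[OF _ B(2), of S] B(1) \<open>K \<subseteq> S\<close> by auto
  define R where "R = vec.span (C - B)"
  have R: "vec.subspace R" "R \<subseteq> S"
    unfolding R_def using C(2) by (auto intro!: vec.span_minimal[OF _ S])
  have "finite C"
    using C(3) vec.independent_bound_general by blast
  have dim_R: "vec.dim R = card (C - B)"
    unfolding R_def using C(3) by (simp add: vec.dim_span vec.dim_eq_card_independent vec.independent_mono)
  have dim_S: "vec.dim S = card (C - B) + card B"
    using vec.basis_card_eq_dim[OF C(2,4,3)] C(1) \<open>finite C\<close>
    by (metis card_Diff_subset card_mono finite_subset le_add_diff_inverse2)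
  have span_B: "vec.span B = K"
    using B(1,3) vec.span_minimal[OF B(1) K] by auto
  have R_plus_K: "subspace_sum R K = S"
    using vec.span_Un[of "C - B" B] C vec.span_minimal[OF C(2) S]
    unfolding R_def subspace_sum_def span_B
    by (metis Un_Diff_cancel2 Un_absorb2 subset_antisym)
  have "vec.dim (R \<inter> K) = 0"
    using dim_subspace_sum_plus_dim_inter[OF R(1) K] R_plus_K dim_R dim_S B(4) by simp
  then have "R \<inter> K \<subseteq> {0}"
    by (simp add: vec.dim_eq_0)
  with R R_plus_K show ?thesis
    by (rule that)
qed

lemma dim_eq_dim_image_plus_dim_kernel:
  fixes f :: "'a::field ^ 'n \<Rightarrow> 'a ^ 'm"
  assumes lin: "Vector_Spaces.linear (*s) (*s) f" and S: "vec.subspace S"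
  shows "vec.dim S = vec.dim (f ` S) + vec.dim (S \<inter> {x. f x = 0})"
proof -
  interpret f: Vector_Spaces.linear "(*s)" "(*s)" f by (rule lin)
  define K where "K = S \<inter> {x. f x = 0}"
  have K: "vec.subspace K"
    unfolding K_def by (intro vec.subspace_inter S f.subspace_kernel)
  obtain R where R: "vec.subspace R" "R \<subseteq> S" and R_plus_K: "subspace_sum R K = S"
    and R_inter_K: "R \<inter> K \<subseteq> {0}"
    using ex_subspace_complement[OF K S] unfolding K_def by blast
  have "inj_on f (vec.span R)"
  proof (rule inj_onI)
    fix x y assume "x \<in> vec.span R" "y \<in> vec.span R" "f x = f y"
    moreover have "vec.span R = R"
      using R(1) by (rule vec.span_eq_iff[THEN iffD2])
    ultimately have "x - y \<in> R \<inter> K"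
      using R vec.subspace_diff by (auto simp: K_def f.diff)
    then show "x = y" using R_inter_K by auto
  qed
  have "f ` R = f ` S"
  proof
    show "f ` S \<subseteq> f ` R"
    proof
      fix z assume "z \<in> f ` S"
      then obtain x y where "x \<in> R" "y \<in> K" "z = f (x + y)"
        unfolding R_plus_K[symmetric] subspace_sum_def by blast
      then show "z \<in> f ` R" by (simp add: K_def f.add)
    qed
  qed (use R(2) in blast)
  have "vec.dim (R \<inter> K) = 0"
    using R_inter_K by (simp add: vec.dim_eq_0)
  then have "vec.dim S = vec.dim R + vec.dim K"
    using dim_subspace_sum_plus_dim_inter[OF R(1) K] R_plus_K by (metis add.right_neutral)
  also have "vec.dim R = vec.dim (f ` S)"
    using vec.dim_image_eq[OF lin \<open>inj_on f (vec.span R)\<close>] \<open>f ` R = f ` S\<close> by simp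
  finally show ?thesis
    unfolding K_def .
qed

text \<open>All six dimensions are computed from Grassmann's formula; the key observation is
  that \<open>(P' + Q) + (P + Q') = P' + Q'\<close> and \<open>(P \<inter> Q') \<inter> (P' \<inter> Q) = P \<inter> Q\<close>.\<close>
lemma dim_diff_inter_sum_exchange:
  fixes P P' Q Q' :: "('a::field ^ 'n) set"
  assumes subspaces: "vec.subspace P" "vec.subspace P'" "vec.subspace Q" "vec.subspace Q'"
    and "P \<subseteq> P'" "Q \<subseteq> Q'"
  shows "vec.dim (P' \<inter> Q') - vec.dim (subspace_sum (P \<inter> Q') (P' \<inter> Q))
       = vec.dim (subspace_sum P' Q \<inter> subspace_sum P Q') - vec.dim (subspace_sum P Q)"
proof -
  note grassmann = dim_subspace_sum_plus_dim_inter
  have "subspace_sum (subspace_sum P' Q) (subspace_sum P Q') = subspace_sum P' Q'"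
  proof (rule subset_antisym)
    show "subspace_sum (subspace_sum P' Q) (subspace_sum P Q') \<subseteq> subspace_sum P' Q'"
    proof
      fix z assume "z \<in> subspace_sum (subspace_sum P' Q) (subspace_sum P Q')"
      then obtain p' q p q' where "z = (p' + q) + (p + q')"
        and "p' \<in> P'" "q \<in> Q" "p \<in> P" "q' \<in> Q'"
        unfolding subspace_sum_def by blast
      moreover have "(p' + q) + (p + q') = (p' + p) + (q + q')"
        by (simp add: algebra_simps)
      ultimately show "z \<in> subspace_sum P' Q'"
        unfolding subspace_sum_def using assms vec.subspace_add by blast
    qed
    show "subspace_sum P' Q' \<subseteq> subspace_sum (subspace_sum P' Q) (subspace_sum P Q')"
    proof
      fix z assume "z \<in> subspace_sum P' Q'"
      then obtain p' q' where "z = (p' + 0) + (0 + q')" "p' \<in> P'" "q' \<in> Q'"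
        unfolding subspace_sum_def by auto
      then show "z \<in> subspace_sum (subspace_sum P' Q) (subspace_sum P Q')"
        unfolding subspace_sum_def using subspaces vec.subspace_0 by blast
    qed
  qed
  moreover have "(P \<inter> Q') \<inter> (P' \<inter> Q) = P \<inter> Q"
    using assms by blast
  moreover have "subspace_sum (P \<inter> Q') (P' \<inter> Q) \<subseteq> P' \<inter> Q'"
    unfolding subspace_sum_def using assms vec.subspace_add by blast
  moreover have "subspace_sum P Q \<subseteq> subspace_sum P' Q \<inter> subspace_sum P Q'"
    unfolding subspace_sum_def using assms by blast
  ultimately show ?thesis
    using grassmann[of "P \<inter> Q'" "P' \<inter> Q"] grassmann[of P' Q'] grassmann[of P Q']
      grassmann[of P' Q] grassmann[of P Q]
      grassmann[of "subspace_sum P' Q" "subspace_sum P Q'"]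
      vec.dim_subset[of "subspace_sum (P \<inter> Q') (P' \<inter> Q)" "P' \<inter> Q'"]
      vec.dim_subset[of "subspace_sum P Q" "subspace_sum P' Q \<inter> subspace_sum P Q'"]
    by (simp add: subspaces vec.subspace_inter subspace_subspace_sum)
qed

section \<open>Connected components and \<open>H\<^sub>0\<close>\<close>

lemma equiv_conn: "equiv UNIV (conn E)"
  unfolding conn_def equiv_def by (auto simp: refl_rtrancl trans_rtrancl sym_rtrancl sym_Un_converse)

lemma conn_refl [simp]: "(x, x) \<in> conn E"
  unfolding conn_def by simp

lemma conn_sym: "(x, y) \<in> conn E \<Longrightarrow> (y, x) \<in> conn E"
  using equiv_conn[of E] by (meson equivE symD)

lemma conn_trans: "(x, y) \<in> conn E \<Longrightarrow> (y, z) \<in> conn E \<Longrightarrow> (x, z) \<in> conn E"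
  using equiv_conn[of E] by (meson equivE transD)

lemma conn_base: "(x, y) \<in> E \<Longrightarrow> (x, y) \<in> conn E"
  unfolding conn_def by blast

lemma conn_mono: "E \<subseteq> E' \<Longrightarrow> conn E \<subseteq> conn E'"
  unfolding conn_def by (rule rtrancl_mono) blast

lemma conn_class_in_components: "conn E `` {x} \<in> components E"
  unfolding components_def by (rule quotientI) simp

lemma componentsE:
  assumes "c \<in> components E"
  obtains x where "c = conn E `` {x}"
  using assms unfolding components_def by (blast elim: quotientE)

lemma component_eq_conn_class: "c \<in> components E \<Longrightarrow> x \<in> c \<Longrightarrow> c = conn E `` {x}"
  by (erule componentsE) (simp add: equiv_class_eq[OF equiv_conn])

lemma conn_Image_component:
  assumes "C \<subseteq> R" "c \<in> components C" "x \<in> c"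
  shows "conn R `` c = conn R `` {x}"
proof -
  have "conn R `` c = (conn C O conn R) `` {x}"
    using component_eq_conn_class[OF assms(2,3)] by auto
  also have "conn C O conn R = conn R"
    using conn_mono[OF assms(1)] unfolding conn_def by (auto intro: rtrancl_trans)
  finally show ?thesis .
qed

lemma rho0_component: "rho0 E v $ c = (if c \<in> components E then \<Sum>x\<in>c. v $ x else 0)"
  unfolding rho0_def by simp

lemma kerE_iff: "v \<in> kerE E \<longleftrightarrow> (\<forall>c \<in> components E. (\<Sum>x\<in>c. v $ x) = 0)"
  unfolding kerE_def vec_eq_iff rho0_component by auto

lemma linear_rho0: "Vector_Spaces.linear (*s) (*s) (rho0 E)"
  by (simp add: Vector_Spaces.linear_iff vec.vector_space_axioms vec_eq_iff rho0_component
      sum.distrib sum_distrib_left del: add_bit_eq_xor mult_bit_eq_and)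

lemma subspace_kerE: "vec.subspace (kerE E)"
  unfolding kerE_def by (rule vec.linear_subspace_kernel[OF linear_rho0])

definition conn_rep :: "('a \<times> 'a) set \<Rightarrow> 'a \<Rightarrow> 'a" where
  "conn_rep E x = (SOME y. y \<in> conn E `` {x})"

lemma conn_rep_conn: "(x, conn_rep E x) \<in> conn E"
  using someI[of "\<lambda>y. y \<in> conn E `` {x}" x] by (simp add: conn_rep_def conn_def)

lemma conn_rep_eq_iff: "conn_rep E x = conn_rep E y \<longleftrightarrow> (x, y) \<in> conn E"
proof
  assume "conn_rep E x = conn_rep E y"
  then show "(x, y) \<in> conn E"
    using conn_rep_conn[of x E] conn_rep_conn[of y E] by (metis conn_sym conn_trans)
next
  assume "(x, y) \<in> conn E"
  then show "conn_rep E x = conn_rep E y"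
    unfolding conn_rep_def by (simp add: equiv_class_eq[OF equiv_conn])
qed

definition edge_vectors :: "('n::finite \<times> 'n) set \<Rightarrow> (bit ^ 'n) set" where
  "edge_vectors E = (\<lambda>(u, v). axis u 1 + axis v 1) ` E"

lemma sum_axis_component: "(\<Sum>x\<in>c. axis u (1::bit) $ x) = (if u \<in> c then 1 else 0)"
  for c :: "'n::finite set"
  by (simp add: axis_def sum.delta)

lemma edge_vectors_subset_kerE: "edge_vectors E \<subseteq> kerE E"
proof
  fix g assume "g \<in> edge_vectors E"
  then obtain u v where uv: "(u, v) \<in> E" and g: "g = axis u 1 + axis v 1"
    unfolding edge_vectors_def by auto
  show "g \<in> kerE E"
    unfolding kerE_iff
  proof
    fix c assume "c \<in> components E"
    then obtain x where "c = conn E `` {x}"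
      by (rule componentsE)
    then have "u \<in> c \<longleftrightarrow> v \<in> c"
      using conn_base[OF uv] by (auto intro: conn_trans conn_sym)
    then show "(\<Sum>x\<in>c. g $ x) = 0"
      unfolding g vector_add_component sum.distrib sum_axis_component by simp
  qed
qed

lemma conn_axis_sum_in_span: "(x, y) \<in> conn E \<Longrightarrow> axis x 1 + axis y 1 \<in> vec.span (edge_vectors E)"
  unfolding conn_def
proof (induction rule: rtrancl_induct)
  case base
  have "axis x 1 + axis x 1 = (0 :: bit ^ _)"
    by (simp add: vec_eq_iff)
  then show ?case by (simp add: vec.span_zero)
next
  case (step y z)
  have "axis y 1 + axis z 1 \<in> edge_vectors E"
    using step(2) unfolding edge_vectors_def by (force simp: add.commute)
  then have "(axis x 1 + axis y 1) + (axis y 1 + axis z 1) \<in> vec.span (edge_vectors E)"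
    by (intro vec.span_add step.IH vec.span_base)
  moreover have "(axis x 1 + axis y 1) + (axis y 1 + axis z 1) = axis x 1 + (axis z 1 :: bit ^ _)"
    by (simp add: vec_eq_iff axis_def)
  ultimately show ?case by simp
qed

lemma conn_rep_fibre: "{x. conn_rep E x = conn_rep E y} = conn E `` {y}"
  using conn_rep_eq_iff conn_sym by fastforce

text \<open>A vector \<open>v\<close> in the kernel is the sum of the vectors \<open>v\<^sub>x (e\<^sub>x + e\<^sub>r\<^sub>x)\<close>, where \<open>r\<^sub>x\<close> is
  the representative of the component of \<open>x\<close>: the remainder \<open>\<Sum>\<^sub>x v\<^sub>x e\<^sub>r\<^sub>x\<close> has the
  component sums of \<open>v\<close> as coordinates, and these vanish.\<close>
lemma kerE_eq_span_edge_vectors: "kerE E = vec.span (edge_vectors E)"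
proof
  show "vec.span (edge_vectors E) \<subseteq> kerE E"
    by (intro vec.span_minimal edge_vectors_subset_kerE subspace_kerE)
  show "kerE E \<subseteq> vec.span (edge_vectors E)"
  proof
    fix v assume v: "v \<in> kerE E"
    let ?r = "conn_rep E"
    have moved: "(\<Sum>x\<in>UNIV. v $ x *s axis (?r x) 1) = 0"
      unfolding vec_eq_iff zero_index
    proof
      fix z
      have "(\<Sum>x\<in>UNIV. v $ x *s axis (?r x) 1) $ z = (\<Sum>x\<in>UNIV. if ?r x = z then v $ x else 0)"
        unfolding sum_component vector_smult_component by (intro sum.cong) (auto simp: axis_def)
      also have "\<dots> = (\<Sum>x\<in>{x. ?r x = z}. v $ x)"
        by (simp add: sum.inter_filter[symmetric])
      also have "\<dots> = 0"
      proof (cases "\<exists>y. ?r y = z")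
        case True
        then obtain y where "z = ?r y" by blast
        then show ?thesis
          using v conn_class_in_components[of E y] unfolding kerE_iff by (simp add: conn_rep_fibre)
      qed simp
      finally show "(\<Sum>x\<in>UNIV. v $ x *s axis (?r x) 1) $ z = 0" .
    qed
    have "v = (\<Sum>x\<in>UNIV. v $ x *s axis x 1) + (\<Sum>x\<in>UNIV. v $ x *s axis (?r x) 1)"
      by (simp only: basis_expansion moved add_0_right)
    also have "\<dots> = (\<Sum>x\<in>UNIV. v $ x *s (axis x 1 + axis (?r x) 1))"
      by (simp only: vec.scale_right_distrib sum.distrib)
    also have "\<dots> \<in> vec.span (edge_vectors E)"
      by (intro vec.span_sum vec.span_scale conn_axis_sum_in_span conn_rep_conn)
    finally show "v \<in> vec.span (edge_vectors E)" .
  qed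
qed

lemma kerE_mono: "E \<subseteq> E' \<Longrightarrow> kerE E \<subseteq> kerE E'"
  unfolding kerE_eq_span_edge_vectors edge_vectors_def by (intro vec.span_mono image_mono)

lemma kerE_Un: "kerE (E \<union> E') = subspace_sum (kerE E) (kerE E')"
  unfolding kerE_eq_span_edge_vectors subspace_sum_def edge_vectors_def image_Un
  by (rule vec.span_Un)

lemma linear_f0: "Vector_Spaces.linear (*s) (*s) (f0 f)"
  by (simp add: Vector_Spaces.linear_iff vec.vector_space_axioms vec_eq_iff f0_def
      sum.distrib sum_distrib_left del: add_bit_eq_xor mult_bit_eq_and)

lemma f0_axis: "f0 f (axis x 1) = axis (f x) 1"
  unfolding f0_def vec_eq_iff by (simp add: sum_axis_component axis_def)

lemma f0_edge_vectors: "f0 f ` edge_vectors E = edge_vectors (img_graph f E)"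
  unfolding edge_vectors_def img_graph_def image_image
  by (intro image_cong) (auto simp: vec.linear_add[OF linear_f0] f0_axis)

lemma f0_image_kerE: "f0 f ` kerE E = kerE (img_graph f E)"
  unfolding kerE_eq_span_edge_vectors f0_edge_vectors[symmetric]
  by (rule vec.linear_span_image[OF linear_f0, symmetric])

lemma conn_Image_component_in_components:
  assumes "C \<subseteq> R" "c \<in> components C"
  shows "conn R `` c \<in> components R"
proof -
  obtain x where "c = conn C `` {x}"
    using assms(2) by (rule componentsE)
  then show ?thesis
    using conn_Image_component[OF assms, of x] conn_class_in_components by simp
qed

lemma Union_components_fibre:
  assumes "C \<subseteq> R" "\<alpha> \<in> components R"
  shows "\<Union>{c \<in> components C. conn R `` c = \<alpha>} = \<alpha>"
proof
  obtain y where \<alpha>: "\<alpha> = conn R `` {y}"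
    using assms(2) by (rule componentsE)
  show "\<Union>{c \<in> components C. conn R `` c = \<alpha>} \<subseteq> \<alpha>"
  proof
    fix x assume "x \<in> \<Union>{c \<in> components C. conn R `` c = \<alpha>}"
    then obtain c where "c \<in> components C" "conn R `` c = \<alpha>" "x \<in> c" by blast
    then have "\<alpha> = conn R `` {x}"
      using conn_Image_component[OF assms(1)] by blast
    then show "x \<in> \<alpha>"
      by simp
  qed
  show "\<alpha> \<subseteq> \<Union>{c \<in> components C. conn R `` c = \<alpha>}"
  proof
    fix x assume "x \<in> \<alpha>"
    then have "conn R `` {x} = \<alpha>"
      unfolding \<alpha> by (simp add: equiv_class_eq[OF equiv_conn] conn_sym)
    then have "conn R `` (conn C `` {x}) = \<alpha>"
      using conn_Image_component[OF assms(1) conn_class_in_components, of x x] by simp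
    moreover have "x \<in> conn C `` {x}"
      by simp
    ultimately show "x \<in> \<Union>{c \<in> components C. conn R `` c = \<alpha>}"
      using conn_class_in_components[of C x] by blast
  qed
qed

lemma rho0_eq_sum_rho0_fibre:
  assumes "C \<subseteq> R"
  shows "rho0 R w $ \<alpha> = (\<Sum>c | c \<in> components C \<and> conn R `` c = \<alpha>. rho0 C w $ c)"
proof -
  define F where "F = {c \<in> components C. conn R `` c = \<alpha>}"
  have "(\<Sum>c\<in>F. rho0 C w $ c) = (\<Sum>c\<in>F. \<Sum>x\<in>c. w $ x)"
    unfolding F_def rho0_component by simp
  also have "\<dots> = (\<Sum>x\<in>\<Union>F. w $ x)"
  proof -
    have "\<forall>c\<in>F. \<forall>c'\<in>F. c \<noteq> c' \<longrightarrow> c \<inter> c' = {}"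
      using quotient_disj[OF equiv_conn] unfolding F_def components_def by blast
    then show ?thesis
      using sum.Union_disjoint[of F "\<lambda>x. w $ x"] by simp
  qed
  also have "\<dots> = rho0 R w $ \<alpha>"
  proof (cases "\<alpha> \<in> components R")
    case True
    then show ?thesis
      unfolding F_def Union_components_fibre[OF assms True] by (simp add: rho0_component)
  next
    case False
    then have "F = {}"
      unfolding F_def using conn_Image_component_in_components[OF assms] by auto
    then show ?thesis
      using False by (simp add: rho0_component)
  qed
  finally show ?thesis
    unfolding F_def by simp
qed

lemma rho0_surjective:
  assumes "\<And>c. c \<notin> components E \<Longrightarrow> u $ c = 0"
  shows "\<exists>w. rho0 E w = u"
proof
  define w where "w = (\<chi> x. if conn_rep E x = x then u $ (conn E `` {x}) else 0)"
  show "rho0 E w = u"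
    unfolding vec_eq_iff
  proof
    fix c
    show "rho0 E w $ c = u $ c"
    proof (cases "c \<in> components E")
      case True
      then obtain y where c: "c = conn E `` {y}"
        by (rule componentsE)
      have "w $ x = (if x = conn_rep E y then u $ c else 0)" if "x \<in> c" for x
      proof -
        have "(y, x) \<in> conn E"
          using that c by simp
        then have "conn_rep E x = conn_rep E y" "conn E `` {x} = c"
          unfolding c by (auto simp: conn_rep_eq_iff conn_sym equiv_class_eq[OF equiv_conn])
        then show ?thesis
          unfolding w_def by auto
      qed
      then have "(\<Sum>x\<in>c. w $ x) = (\<Sum>x\<in>c. if x = conn_rep E y then u $ c else 0)"
        by simp
      also have "\<dots> = u $ c"
        using conn_rep_conn[of y E] c by simp
      finally show ?thesis
        using True by (simp add: rho0_component)
    qed (simp add: rho0_component assms)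
  qed
qed

section \<open>Vietoris-Rips graphs\<close>

lemma VRm_subset_VR: "VRm d r \<subseteq> VR d r"
  unfolding VR_def VRm_def by auto

lemma img_graph_mono: "E \<subseteq> E' \<Longrightarrow> img_graph f E \<subseteq> img_graph f E'"
  unfolding img_graph_def by (rule image_mono)

text \<open>Only finitely many distances occur, so \<open>VR\<^sup>-\<^sub>b = VR\<^sub>r\<close> for the largest distance
  \<open>r < b\<close> (or \<open>r = 0\<close>).\<close>
lemma ker_minus_eq_kerE_VRm:
  fixes d :: "'x::finite \<Rightarrow> 'x \<Rightarrow> real"
  assumes "0 < b"
  shows "ker_minus d b = kerE (VRm d b)"
proof -
  define D where "D = insert 0 {d x y |x y. d x y < b}"
  have "finite D"
  proof -
    have "{d x y |x y. d x y < b} \<subseteq> (\<lambda>(x, y). d x y) ` UNIV" by auto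
    then have "finite {d x y |x y. d x y < b}"
      by (rule finite_subset) simp
    then show ?thesis
      unfolding D_def by simp
  qed
  define r where "r = Max D"
  have "r \<in> D"
    unfolding r_def using \<open>finite D\<close> by (rule Max_in) (simp add: D_def)
  have "0 \<le> r"
    unfolding r_def using \<open>finite D\<close> by (rule Max_ge) (simp add: D_def)
  then have "r \<in> {0..<b}"
    using \<open>r \<in> D\<close> assms unfolding D_def by auto
  have "d x y < b \<Longrightarrow> d x y \<le> r" for x y
    unfolding r_def using \<open>finite D\<close> by (intro Max_ge) (auto simp: D_def)
  then have "VR d r = VRm d b"
    using \<open>r \<in> {0..<b}\<close> unfolding VR_def VRm_def by fastforce
  moreover have "kerE (VR d s) \<subseteq> kerE (VRm d b)" if "s < b" for s
    using that by (intro kerE_mono) (auto simp: VR_def VRm_def)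
  ultimately show ?thesis
    unfolding ker_minus_def using \<open>r \<in> {0..<b}\<close>
    by (intro subset_antisym UN_least UN_upper[of r, THEN subset_trans[rotated]]) auto
qed

section \<open>The graph \<open>G(f)\<close>\<close>

text \<open>The endpoint maps of the graph in \<open>G_H1_dim\<close>, for arbitrary graphs \<open>A \<supseteq> C \<subseteq> B\<close>.\<close>
definition zigzag_src :: "'z set \<times> bool \<Rightarrow> 'z set + 'z set + 'z set" where
  "zigzag_src = (\<lambda>(c, _). Inr (Inl c))"

definition zigzag_tgt :: "('z \<times> 'z) set \<Rightarrow> ('z \<times> 'z) set \<Rightarrow> 'z set \<times> bool \<Rightarrow> 'z set + 'z set + 'z set"
  where "zigzag_tgt A B = (\<lambda>(c, side). if side then Inr (Inr (conn B `` c)) else Inl (conn A `` c))"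

lemma bit_add_eq_0_iff: "(a::bit) + b = 0 \<longleftrightarrow> a = b"
  by auto

lemma cycle_space_zigzag_iff:
  fixes C A B :: "('z::finite \<times> 'z) set"
  shows "v \<in> cycle_space (components C \<times> UNIV) zigzag_src (zigzag_tgt A B) \<longleftrightarrow>
     (\<forall>c. c \<notin> components C \<longrightarrow> v $ (c, False) = 0) \<and>
     (\<forall>c. v $ (c, False) = v $ (c, True)) \<and>
     (\<forall>\<alpha>. (\<Sum>c | c \<in> components C \<and> conn A `` c = \<alpha>. v $ (c, False)) = 0) \<and>
     (\<forall>\<beta>. (\<Sum>c | c \<in> components C \<and> conn B `` c = \<beta>. v $ (c, True)) = 0)"
proof -
  define Es where "Es = components C \<times> (UNIV :: bool set)"
  let ?s = "zigzag_src :: _ \<Rightarrow> 'z set + 'z set + 'z set" and ?t = "zigzag_tgt A B"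
  let ?boundary = "\<lambda>w. (\<Sum>e | e \<in> Es \<and> ?s e = w. v $ e) + (\<Sum>e | e \<in> Es \<and> ?t e = w. v $ e)"
  have inj_side: "inj_on (\<lambda>c. (c, side)) X" for side and X :: "'z set set"
    by (rule inj_onI) simp
  have "{e \<in> Es. ?t e = Inl \<alpha>} = (\<lambda>c. (c, False)) ` {c \<in> components C. conn A `` c = \<alpha>}" for \<alpha>
    unfolding Es_def zigzag_tgt_def by (auto split: if_splits)
  then have at_A: "?boundary (Inl \<alpha>) = (\<Sum>c | c \<in> components C \<and> conn A `` c = \<alpha>. v $ (c, False))"
    for \<alpha>
    by (simp add: zigzag_src_def sum.reindex[OF inj_side] split_beta)
  have "{e \<in> Es. ?t e = Inr (Inr \<beta>)} = (\<lambda>c. (c, True)) ` {c \<in> components C. conn B `` c = \<beta>}"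
    for \<beta>
    unfolding Es_def zigzag_tgt_def by (auto split: if_splits)
  then have at_B: "?boundary (Inr (Inr \<beta>)) = (\<Sum>c | c \<in> components C \<and> conn B `` c = \<beta>. v $ (c, True))"
    for \<beta>
    by (simp add: zigzag_src_def sum.reindex[OF inj_side] split_beta)
  have "{e \<in> Es. ?s e = Inr (Inl c)} = (if c \<in> components C then {(c, False), (c, True)} else {})"
    for c
    unfolding Es_def zigzag_src_def by auto
  then have at_C: "?boundary (Inr (Inl c)) = (if c \<in> components C then v $ (c, False) + v $ (c, True) else 0)"
    for c
    by (simp add: zigzag_tgt_def split_beta)
  show ?thesis
    unfolding cycle_space_def mem_Collect_eq split_sum_all at_A at_B at_C Es_def[symmetric]
    by (auto simp: Es_def bit_add_eq_0_iff split_paired_All all_bool_eq simp del: add_bit_eq_xor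
        split: if_splits)
qed

definition edge_component_sums :: "('z::finite \<times> 'z) set \<Rightarrow> bit ^ 'z \<Rightarrow> bit ^ ('z set \<times> bool)" where
  "edge_component_sums C w = (\<chi> e. rho0 C w $ fst e)"

lemma edge_component_sums_component [simp]: "edge_component_sums C w $ (c, side) = rho0 C w $ c"
  unfolding edge_component_sums_def by simp

lemma linear_edge_component_sums: "Vector_Spaces.linear (*s) (*s) (edge_component_sums C)"
  by (simp add: Vector_Spaces.linear_iff vec.vector_space_axioms vec_eq_iff
      vec.linear_add[OF linear_rho0] vec.linear_scale[OF linear_rho0]
      del: add_bit_eq_xor mult_bit_eq_and)

lemma edge_component_sums_eq_0_iff: "edge_component_sums C w = 0 \<longleftrightarrow> w \<in> kerE C"
  unfolding kerE_def vec_eq_iff by (auto simp: split_paired_All)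

lemma kerE_iff_fibre_sums:
  assumes "C \<subseteq> R"
  shows "w \<in> kerE R \<longleftrightarrow>
    (\<forall>\<alpha>. (\<Sum>c | c \<in> components C \<and> conn R `` c = \<alpha>. rho0 C w $ c) = 0)"
  unfolding kerE_def vec_eq_iff rho0_eq_sum_rho0_fibre[OF assms] by simp

lemma cycle_space_zigzag_eq_image:
  assumes "C \<subseteq> A" "C \<subseteq> B"
  shows "cycle_space (components C \<times> UNIV) zigzag_src (zigzag_tgt A B)
    = edge_component_sums C ` (kerE A \<inter> kerE B)"
proof (intro set_eqI iffI)
  fix v assume "v \<in> cycle_space (components C \<times> UNIV) zigzag_src (zigzag_tgt A B)"
  then have outside: "\<And>c. c \<notin> components C \<Longrightarrow> v $ (c, False) = 0"
    and sides: "\<And>c. v $ (c, False) = v $ (c, True)"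
    and fibres_A: "\<And>\<alpha>. (\<Sum>c | c \<in> components C \<and> conn A `` c = \<alpha>. v $ (c, False)) = 0"
    and fibres_B: "\<And>\<beta>. (\<Sum>c | c \<in> components C \<and> conn B `` c = \<beta>. v $ (c, True)) = 0"
    unfolding cycle_space_zigzag_iff by blast+
  obtain w where w: "rho0 C w = (\<chi> c. v $ (c, False))"
    using rho0_surjective[of C "\<chi> c. v $ (c, False)"] outside by auto
  have "v = edge_component_sums C w"
    unfolding vec_eq_iff using sides by (auto simp: w split_paired_All all_bool_eq)
  moreover have "w \<in> kerE A" "w \<in> kerE B"
    using fibres_A fibres_B sides
    by (simp_all add: kerE_iff_fibre_sums[OF assms(1)] kerE_iff_fibre_sums[OF assms(2)] w)
  ultimately show "v \<in> edge_component_sums C ` (kerE A \<inter> kerE B)"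
    by blast
next
  fix v assume "v \<in> edge_component_sums C ` (kerE A \<inter> kerE B)"
  then obtain w where "w \<in> kerE A" "w \<in> kerE B" and v: "v = edge_component_sums C w"
    by blast
  then show "v \<in> cycle_space (components C \<times> UNIV) zigzag_src (zigzag_tgt A B)"
    unfolding cycle_space_zigzag_iff v
    by (simp add: kerE_iff_fibre_sums[OF assms(1)] kerE_iff_fibre_sums[OF assms(2)] rho0_component)
qed

lemma graph_H1_dim_zigzag:
  assumes "C \<subseteq> A" "C \<subseteq> B"
  shows "graph_H1_dim (components C \<times> UNIV) zigzag_src (zigzag_tgt A B)
    = vec.dim (kerE A \<inter> kerE B) - vec.dim (kerE C)"
proof -
  have "kerE A \<inter> kerE B \<inter> {w. edge_component_sums C w = 0} = kerE C"
    using kerE_mono[OF assms(1)] kerE_mono[OF assms(2)] by (auto simp: edge_component_sums_eq_0_iff)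
  then show ?thesis
    unfolding graph_H1_dim_def cycle_space_zigzag_eq_image[OF assms]
    using dim_eq_dim_image_plus_dim_kernel[OF linear_edge_component_sums]
      vec.subspace_inter[OF subspace_kerE subspace_kerE]
    by (metis add_diff_cancel_right')
qed

theorem proposition3p1:
  fixes dX :: "'x::finite \<Rightarrow> 'x \<Rightarrow> real"
    and dZ :: "'z::finite \<Rightarrow> 'z \<Rightarrow> real"
    and f :: "'x \<Rightarrow> 'z"
    and a b :: real
  assumes "finite_metric dX" and "finite_metric dZ"
    and "a \<in> bars0 dX" and "b \<in> bars0 dZ"
  shows "Mf0 dX dZ f a b = G_H1_dim dX dZ f a b"
proof -
  have "0 < a" "0 < b"
    using assms(3,4) unfolding bars0_def by auto
  define P' P Q' Q
    where "P' = kerE (img_graph f (VR dX a))" and "P = kerE (img_graph f (VRm dX a))"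
      and "Q' = kerE (VR dZ b)" and "Q = kerE (VRm dZ b)"
  have C_sub: "GC dX dZ f a b \<subseteq> GA dX dZ f a b" "GC dX dZ f a b \<subseteq> GB dX dZ f a b"
    unfolding GA_def GB_def GC_def using img_graph_mono[OF VRm_subset_VR] VRm_subset_VR by blast+
  have "Mf0 dX dZ f a b = vec.dim (P' \<inter> Q') - vec.dim (subspace_sum (P \<inter> Q') (P' \<inter> Q))"
    unfolding Mf0_def quot_dim_def ker_plus_def ker_minus_eq_kerE_VRm[OF \<open>0 < a\<close>]
      ker_minus_eq_kerE_VRm[OF \<open>0 < b\<close>] f0_image_kerE P'_def P_def Q'_def Q_def ..
  also have "\<dots> = vec.dim (subspace_sum P' Q \<inter> subspace_sum P Q') - vec.dim (subspace_sum P Q)"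
    unfolding P'_def P_def Q'_def Q_def
    by (intro dim_diff_inter_sum_exchange subspace_kerE kerE_mono img_graph_mono VRm_subset_VR)
  also have "\<dots> = vec.dim (kerE (GA dX dZ f a b) \<inter> kerE (GB dX dZ f a b))
      - vec.dim (kerE (GC dX dZ f a b))"
    unfolding GA_def GB_def GC_def kerE_Un P'_def P_def Q'_def Q_def ..
  also have "\<dots> = G_H1_dim dX dZ f a b"
    unfolding G_H1_dim_def graph_H1_dim_zigzag[OF C_sub, symmetric]
    by (simp add: zigzag_src_def zigzag_tgt_def)
  finally show ?thesis .
qed

end
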